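(* For $k\ge0$ let $\bar H_k\in\mathbb{R}^{p\times p}$ be (random) symmetric matrices with symmetric indefinite factorizations $\bar H_k=P_k^TL_kB_kL_k^TP_k$. Let $\tau_k>0$ be thresholds and let $\underline{\tau}$ be a constant with $0<\underline{\tau}\le\tau_k$ for all $k$. Let $B_k=Q_k\Lambda_kQ_k^T$ be an eigendecomposition with $\Lambda_k=\mathrm{diag}(\lambda_{k1},\dots,\lambda_{kp})$, set $\bar\Lambda_k=\mathrm{diag}(\bar\lambda_{k1},\dots,\bar\lambda_{kp})$ with $\bar\lambda_{kj}=\max\{\tau_k,|\lambda_{kj}|\}$, and $\bar{\bar H}_k=P_k^TL_kQ_k\bar\Lambda_kQ_k^TL_k^TP_k$. Then: (a) $\lambda_{\min}(\bar{\bar H}_k)\ge\underline{\sigma}^2\underline{\tau}>0$; (b) $\bar{\bar H}_k^{-1}$ exists a.s., $c_k^2\bar{\bar H}_k^{-1}\to0$ a.s., and for some constants $\delta,\rho>0$, $\mathbb{E}\big[\|\bar{\bar H}_k^{-1}\|^{2+\delta}\big]\le\rho$.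
   Context: In the factorization $P_k\bar H_kP_k^T=L_kB_kL_k^T$: $P_k$ is a permutation matrix, $B_k$ is block diagonal with symmetric $1\times1$ or $2\times2$ blocks, and $L_k$ is unit lower triangular with entries bounded in magnitude by a fixed constant independent of $k$. $\underline{\sigma}>0$ is a constant, independent of $k$ and of the sample path, with $\sigma_{\min}(L_k)\ge\underline{\sigma}$ for all $k$ (smallest singular value). $\{c_k\}$ is a positive scalar sequence decreasing to $0$ (the perturbation-size gain of the second-order simultaneous-perturbation algorithm). *)

theory Defs
  imports "HOL-Analysis.Analysis" "HOL-Probability.Probability"
begin

text \<open>Square real matrices indexed by a finite linearly ordered type 'p (so p = CARD('p)).\<close>

definition mdiag :: "('p::finite \<Rightarrow> real) \<Rightarrow> real^'p^'p" where
  "mdiag d = (\<chi> i j. if i = j then d i else 0)"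

definition perm_matrix :: "real^'p^'p \<Rightarrow> bool" where
  "perm_matrix P \<longleftrightarrow> (\<exists>\<pi>. \<pi> permutes (UNIV::'p set) \<and>
      P = (\<chi> i j. if \<pi> i = j then 1 else 0))"

definition unit_lower_triangular :: "((real, 'p::{finite,linorder}) vec, 'p) vec \<Rightarrow> bool" where
  "unit_lower_triangular L \<longleftrightarrow> (\<forall>i. L$i$i = 1) \<and> (\<forall>i j. i < j \<longrightarrow> L$i$j = 0)"

definition symmetric_matrix :: "real^'p^'p \<Rightarrow> bool" where
  "symmetric_matrix A \<longleftrightarrow> transpose A = A"

text \<open>Block diagonal with symmetric 1x1 or 2x2 diagonal blocks: the index set is partitioned
  into consecutive blocks of size 1 or 2, and all entries outside the blocks vanish.\<close>
definition block_diag_12 :: "((real, 'p::{finite,linorder}) vec, 'p) vec \<Rightarrow> bool" where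
  "block_diag_12 B \<longleftrightarrow> symmetric_matrix B \<and>
     (\<exists>blocks :: 'p set set.
        (\<forall>i. \<exists>!b. b \<in> blocks \<and> i \<in> b) \<and>
        (\<forall>b\<in>blocks. (card b = 1 \<or> card b = 2) \<and>
                     (\<forall>x y z. x \<in> b \<longrightarrow> z \<in> b \<longrightarrow> x \<le> y \<longrightarrow> y \<le> z \<longrightarrow> y \<in> b)) \<and>
        (\<forall>i j. B$i$j \<noteq> 0 \<longrightarrow> (\<exists>b\<in>blocks. i \<in> b \<and> j \<in> b)))"

definition orthogonal_mat :: "real^'p^'p \<Rightarrow> bool" where
  "orthogonal_mat Q \<longleftrightarrow> transpose Q ** Q = mat 1"

definition is_eigenvalue :: "real^'p^'p \<Rightarrow> real \<Rightarrow> bool" where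
  "is_eigenvalue A \<mu> \<longleftrightarrow> (\<exists>v. v \<noteq> 0 \<and> A *v v = \<mu> *\<^sub>R v)"

definition lambda_min :: "real^'p^'p \<Rightarrow> real" where
  "lambda_min A = Min {\<mu>. is_eigenvalue A \<mu>}"

definition sigma_min :: "real^'p^'p \<Rightarrow> real" where
  "sigma_min A = sqrt (lambda_min (transpose A ** A))"

definition op_norm :: "real^'p^'p \<Rightarrow> real" where
  "op_norm A = onorm (\<lambda>x. A *v x)"

end

(* For z = Q^T L^T P x one has x^T Hbb x = z^T Lambdabar z >= tau_k |z|^2, and
   |z| = |L^T P x| >= sigma |x|: P and Q are orthogonal, and a square matrix and its transpose
   have the same smallest singular value. So every Hbb_k is uniformly coercive with constant
   m = sigma^2 tau_low, for all k and all sample points. Since the smallest eigenvalue of a symmetric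
   matrix is the minimum of its Rayleigh quotient, this gives (a); coercivity also bounds the
   inverse by 1/m in operator norm, whence (b) holds surely and not only almost surely.
   The factorisation of Hbar_k, the block structure of B_k and the bound on the entries of L_k
   are not needed. *)

theory Submission
  imports Defs
begin

lemma inner_matrix_vector_transpose:
  fixes A :: "real^'n^'m"
  shows "(A *v x) \<bullet> y = x \<bullet> (transpose A *v y)"
  by (metis dot_lmul_matrix inner_commute transpose_matrix_vector)

lemma symmetric_matrix_inner_commute:
  assumes "symmetric_matrix A"
  shows "(A *v x) \<bullet> y = x \<bullet> (A *v y)"
  by (metis assms inner_matrix_vector_transpose symmetric_matrix_def)

lemma nonneg_quadratic_linear_coeff_eq_0:
  fixes a b :: real
  assumes nonneg: "\<And>t. 0 \<le> a * t + b * t\<^sup>2"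
  shows "a = 0"
proof (rule ccontr)
  assume "a \<noteq> 0"
  define t where "t = - a / (\<bar>b\<bar> + 1)"
  have "a * t + b * t\<^sup>2 \<le> a * t + \<bar>b\<bar> * t\<^sup>2"
    by (simp add: mult_right_mono)
  also have "\<dots> = - a\<^sup>2 / (\<bar>b\<bar> + 1)\<^sup>2"
    by (simp add: t_def divide_simps power2_eq_square) (simp add: algebra_simps)
  also have "\<dots> < 0"
    using \<open>a \<noteq> 0\<close> by simp
  finally show False
    using nonneg[of t] by linarith
qed

lemma quadratic_form_minimizer_eigenvector:
  fixes A :: "real^'n^'n"
  assumes A: "symmetric_matrix A" and v: "v \<bullet> v = 1"
    and min: "\<And>x. (v \<bullet> (A *v v)) * (x \<bullet> x) \<le> x \<bullet> (A *v x)"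
  shows "A *v v = (v \<bullet> (A *v v)) *\<^sub>R v"
proof -
  define \<mu> where "\<mu> = v \<bullet> (A *v v)"
  \<comment> \<open>The residual r is orthogonal to v; expanding the bound at v + t r leaves
    0 \<le> 2 t |r|^2 + O(t^2) for all t, which forces r = 0.\<close>
  define r where "r = A *v v - \<mu> *\<^sub>R v"
  have vr: "v \<bullet> r = 0"
    using v by (simp add: r_def \<mu>_def inner_diff_right)
  have rAv: "r \<bullet> (A *v v) = r \<bullet> r"
    using vr by (simp add: r_def inner_diff_right inner_diff_left inner_commute)
  have vAr: "v \<bullet> (A *v r) = r \<bullet> r"
    using rAv symmetric_matrix_inner_commute[OF A, of v r] by (simp add: inner_commute)
  have "0 \<le> (2 * (r \<bullet> r)) * t + (r \<bullet> (A *v r) - \<mu> * (r \<bullet> r)) * t\<^sup>2" for t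
  proof -
    have "\<mu> * ((v + t *\<^sub>R r) \<bullet> (v + t *\<^sub>R r)) \<le> (v + t *\<^sub>R r) \<bullet> (A *v (v + t *\<^sub>R r))"
      unfolding \<mu>_def by (rule min)
    then show ?thesis
      using v vr rAv vAr
      by (simp add: \<mu>_def matrix_vector_right_distrib matrix_vector_mult_scaleR inner_add_left
          inner_add_right inner_commute algebra_simps power2_eq_square)
  qed
  then have "2 * (r \<bullet> r) = 0"
    by (rule nonneg_quadratic_linear_coeff_eq_0)
  then show ?thesis
    by (simp add: r_def \<mu>_def)
qed

lemma symmetric_matrix_min_eigenpair:
  fixes A :: "real^'n^'n"
  assumes A: "symmetric_matrix A"
  shows "\<exists>\<mu> v. v \<noteq> 0 \<and> A *v v = \<mu> *\<^sub>R v \<and> (\<forall>x. \<mu> * (x \<bullet> x) \<le> x \<bullet> (A *v x))"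
proof -
  let ?q = "\<lambda>x. x \<bullet> (A *v x)"
  have "continuous_on (sphere 0 1) ?q"
    by (intro continuous_intros linear_continuous_on bounded_linear_intros)
  moreover have "axis undefined 1 \<in> sphere (0::real^'n) 1"
    by (simp add: norm_axis_1)
  ultimately obtain v where v: "v \<in> sphere 0 1" and v_min: "\<And>y. y \<in> sphere 0 1 \<Longrightarrow> ?q v \<le> ?q y"
    using continuous_attains_inf[OF compact_sphere] by blast
  have q_lower: "?q v * (x \<bullet> x) \<le> ?q x" for x
  proof (cases "x = 0")
    case False
    then have "?q v \<le> ?q (x /\<^sub>R norm x)"
      by (intro v_min) simp
    also have "\<dots> = ?q x / (x \<bullet> x)"
      by (simp add: matrix_vector_mult_scaleR dot_square_norm power2_eq_square divide_simps)
    finally show ?thesis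
      using False by (simp add: divide_simps)
  qed simp
  have "v \<bullet> v = 1"
    using v by (simp add: dot_square_norm)
  then have "A *v v = ?q v *\<^sub>R v"
    using q_lower by (rule quadratic_form_minimizer_eigenvector[OF A])
  moreover have "v \<noteq> 0"
    using v by auto
  ultimately show ?thesis
    using q_lower by blast
qed

lemma symmetric_matrix_eigenvectors_orthogonal:
  assumes A: "symmetric_matrix A" and "A *v v = a *\<^sub>R v" "A *v w = b *\<^sub>R w" "a \<noteq> b"
  shows "v \<bullet> w = 0"
proof -
  have "a * (v \<bullet> w) = (A *v v) \<bullet> w"
    using assms by simp
  also have "\<dots> = v \<bullet> (A *v w)"
    by (rule symmetric_matrix_inner_commute[OF A])
  also have "\<dots> = b * (v \<bullet> w)"
    using assms by simp
  finally show ?thesis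
    using \<open>a \<noteq> b\<close> by simp
qed

lemma finite_eigenvalues_symmetric_matrix:
  fixes A :: "real^'n^'n"
  assumes A: "symmetric_matrix A"
  shows "finite {\<mu>. is_eigenvalue A \<mu>}"
proof -
  let ?E = "{\<mu>. is_eigenvalue A \<mu>}"
  define ev where "ev \<mu> = (SOME v. v \<noteq> 0 \<and> A *v v = \<mu> *\<^sub>R v)" for \<mu>
  have ev: "ev \<mu> \<noteq> 0" "A *v ev \<mu> = \<mu> *\<^sub>R ev \<mu>" if "\<mu> \<in> ?E" for \<mu>
    using someI_ex[of "\<lambda>v. v \<noteq> 0 \<and> A *v v = \<mu> *\<^sub>R v"] that
    by (auto simp: ev_def is_eigenvalue_def)
  have "inj_on ev ?E"
    by (rule inj_onI) (metis ev scaleR_cancel_right)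
  moreover have "pairwise orthogonal (ev ` ?E)"
    unfolding pairwise_def orthogonal_def
    by (metis ev(2) image_iff symmetric_matrix_eigenvectors_orthogonal[OF A])
  then have "independent (ev ` ?E)"
    by (rule pairwise_orthogonal_independent) (use ev in auto)
  then have "finite (ev ` ?E)"
    using independent_bound by blast
  ultimately show ?thesis
    using finite_imageD by blast
qed

lemma le_lambda_min_iff:
  fixes A :: "real^'n^'n"
  assumes A: "symmetric_matrix A"
  shows "c \<le> lambda_min A \<longleftrightarrow> (\<forall>x. c * (x \<bullet> x) \<le> x \<bullet> (A *v x))"
proof -
  from symmetric_matrix_min_eigenpair[OF A] obtain \<mu> v
    where v: "v \<noteq> 0" "A *v v = \<mu> *\<^sub>R v" and "\<forall>x. \<mu> * (x \<bullet> x) \<le> x \<bullet> (A *v x)"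
    by blast
  then have \<mu>_min: "\<mu> * (x \<bullet> x) \<le> x \<bullet> (A *v x)" for x
    by blast
  have "\<mu> \<le> \<nu>" if \<nu>: "is_eigenvalue A \<nu>" for \<nu>
  proof -
    obtain w where w: "w \<noteq> 0" "A *v w = \<nu> *\<^sub>R w"
      using \<nu> unfolding is_eigenvalue_def by blast
    then have "\<mu> * (w \<bullet> w) \<le> \<nu> * (w \<bullet> w)"
      using \<mu>_min[of w] by simp
    then show ?thesis
      using w by simp
  qed
  moreover have "is_eigenvalue A \<mu>"
    using v unfolding is_eigenvalue_def by blast
  ultimately have "lambda_min A = \<mu>"
    unfolding lambda_min_def using finite_eigenvalues_symmetric_matrix[OF A] by (intro Min_eqI) auto
  moreover have "(\<forall>x. c * (x \<bullet> x) \<le> x \<bullet> (A *v x)) \<longleftrightarrow> c \<le> \<mu>"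
  proof
    assume "\<forall>x. c * (x \<bullet> x) \<le> x \<bullet> (A *v x)"
    then have "c * (v \<bullet> v) \<le> v \<bullet> (A *v v)"
      by blast
    then have "c * (v \<bullet> v) \<le> \<mu> * (v \<bullet> v)"
      using v by simp
    then show "c \<le> \<mu>"
      using v by simp
  next
    assume "c \<le> \<mu>"
    then have "c * (x \<bullet> x) \<le> \<mu> * (x \<bullet> x)" for x
      by (simp add: mult_right_mono)
    then show "\<forall>x. c * (x \<bullet> x) \<le> x \<bullet> (A *v x)"
      using \<mu>_min by (meson order.trans)
  qed
  ultimately show ?thesis
    by simp
qed

lemma sigma_min_norm_lower:
  fixes L :: "real^'n^'n"
  assumes s: "0 \<le> s" "s \<le> sigma_min L"
  shows "s * norm x \<le> norm (L *v x)"
proof (cases "s = 0")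
  case False
  let ?G = "transpose L ** L"
  have sym: "symmetric_matrix ?G"
    by (simp add: symmetric_matrix_def matrix_transpose_mul)
  have "0 < s" "s \<le> sqrt (lambda_min ?G)"
    using s False by (simp_all add: sigma_min_def)
  then have "s\<^sup>2 \<le> lambda_min ?G"
    by (metis less_le_trans power_mono real_sqrt_gt_0_iff less_imp_le real_sqrt_pow2)
  then have "s\<^sup>2 * (x \<bullet> x) \<le> x \<bullet> (?G *v x)"
    by (simp add: le_lambda_min_iff[OF sym])
  also have "\<dots> = x \<bullet> (transpose L *v (L *v x))"
    by (simp only: matrix_vector_mul_assoc)
  also have "\<dots> = (L *v x) \<bullet> (L *v x)"
    by (rule inner_matrix_vector_transpose[symmetric])
  finally have "(s * norm x)\<^sup>2 \<le> (norm (L *v x))\<^sup>2"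
    by (simp add: power_mult_distrib dot_square_norm)
  then show ?thesis
    by (rule power2_le_imp_le) simp
qed simp

lemma quadratic_lower_imp_norm_lower:
  fixes H :: "real^'n^'n"
  assumes "\<And>x. m * (x \<bullet> x) \<le> x \<bullet> (H *v x)"
  shows "m * norm x \<le> norm (H *v x)"
proof (cases "x = 0")
  case False
  have "norm x * (m * norm x) \<le> norm x * norm (H *v x)"
    using assms[of x] norm_cauchy_schwarz[of x "H *v x"]
    by (simp add: dot_square_norm power2_eq_square algebra_simps)
  then show ?thesis
    using False by simp
qed simp

lemma norm_lower_imp_invertible:
  fixes H :: "real^'n^'n"
  assumes m: "0 < m" and lower: "\<And>x. m * norm x \<le> norm (H *v x)"
  shows "invertible H"
proof -
  have "inj ((*v) H)"
  proof (rule injI)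
    fix x y
    assume "H *v x = H *v y"
    then have "m * norm (x - y) \<le> 0"
      using lower[of "x - y"] by (simp add: matrix_vector_mult_diff_distrib)
    then show "x = y"
      using m by (simp add: mult_le_0_iff)
  qed
  then show ?thesis
    using matrix_left_invertible_injective invertible_left_inverse by blast
qed

lemma matrix_inv_right:
  fixes H :: "real^'n^'n"
  assumes "invertible H"
  shows "H ** matrix_inv H = mat 1"
  using someI_ex[OF assms[unfolded invertible_def]] by (simp add: matrix_inv_def)

lemma norm_lower_imp_op_norm_matrix_inv_le:
  fixes H :: "real^'n^'n"
  assumes m: "0 < m" and lower: "\<And>x. m * norm x \<le> norm (H *v x)"
  shows "op_norm (matrix_inv H) \<le> 1 / m"
  unfolding op_norm_def
proof (rule onorm_le)
  fix y
  have "H *v (matrix_inv H *v y) = y"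
    using matrix_inv_right[OF norm_lower_imp_invertible[OF assms]]
    by (simp add: matrix_vector_mul_assoc)
  then have "m * norm (matrix_inv H *v y) \<le> norm y"
    using lower[of "matrix_inv H *v y"] by simp
  then show "norm (matrix_inv H *v y) \<le> 1 / m * norm y"
    using m by (simp add: field_simps)
qed

lemma norm_transpose_lower:
  fixes L :: "real^'n^'n"
  assumes s: "0 \<le> s" and lower: "\<And>x. s * norm x \<le> norm (L *v x)"
  shows "s * norm w \<le> norm (transpose L *v w)"
proof (cases "s = 0")
  case False
  define z where "z = matrix_inv L *v w"
  have Lz: "L *v z = w"
    using matrix_inv_right[OF norm_lower_imp_invertible[OF _ lower]] s False
    by (simp add: z_def matrix_vector_mul_assoc)
  have "s * (w \<bullet> w) = s * ((transpose L *v w) \<bullet> z)"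
    using Lz by (metis inner_commute inner_matrix_vector_transpose)
  also have "\<dots> \<le> norm (transpose L *v w) * (s * norm z)"
    using s norm_cauchy_schwarz[of "transpose L *v w" z]
    by (simp add: mult_left_mono algebra_simps del: transpose_matrix_vector)
  also have "\<dots> \<le> norm (transpose L *v w) * norm w"
    using lower[of z] Lz by (simp add: mult_left_mono)
  finally have "norm w * (s * norm w) \<le> norm w * norm (transpose L *v w)"
    by (simp add: dot_square_norm power2_eq_square algebra_simps)
  then show ?thesis
    by (cases "w = 0") simp_all
qed simp

lemma norm_orthogonal_matrix_mult:
  fixes Q :: "real^'n^'n"
  assumes "orthogonal_matrix Q"
  shows "norm (Q *v x) = norm x"
proof -
  have "(Q *v x) \<bullet> (Q *v x) = x \<bullet> x"
    using assms
    by (simp add: inner_matrix_vector_transpose matrix_vector_mul_assoc orthogonal_matrix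
        del: transpose_matrix_vector)
  then show ?thesis
    by (simp add: dot_square_norm)
qed

lemma perm_matrix_orthogonal:
  fixes P :: "real^'n^'n"
  assumes "perm_matrix P"
  shows "orthogonal_matrix P"
proof -
  obtain \<pi> where \<pi>: "\<pi> permutes UNIV" and P: "P = (\<chi> i j. if \<pi> i = j then 1 else 0)"
    using assms unfolding perm_matrix_def by blast
  have "(transpose P ** P) $ i $ j = mat 1 $ i $ j" for i j
  proof -
    have "(transpose P ** P) $ i $ j = (\<Sum>k\<in>UNIV. (\<lambda>l. if l = i \<and> l = j then 1 else 0) (\<pi> k))"
      by (auto simp: P matrix_matrix_mult_def transpose_def intro!: sum.cong)
    also have "\<dots> = (\<Sum>l\<in>UNIV. if l = i \<and> l = j then 1 else 0)"
      using sum.permute[OF \<pi>, of "\<lambda>l. if l = i \<and> l = j then 1 else 0 :: real"] by (simp add: comp_def)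
    also have "\<dots> = mat 1 $ i $ j"
      by (cases "i = j") (auto simp: mat_def intro: sum.neutral)
    finally show ?thesis .
  qed
  then show ?thesis
    unfolding orthogonal_matrix by (simp add: vec_eq_iff)
qed

lemma transpose_mdiag [simp]: "transpose (mdiag d) = mdiag d"
  by (simp add: mdiag_def transpose_def vec_eq_iff)

lemma mdiag_quadratic_lower:
  assumes "\<And>j. t \<le> d j"
  shows "t * (z \<bullet> z) \<le> z \<bullet> (mdiag d *v z)"
proof -
  have mdiag_mult: "mdiag d *v z = (\<chi> i. d i * z $ i)"
    by (simp add: mdiag_def matrix_vector_mult_def vec_eq_iff if_distrib[of "\<lambda>a. a * _"] cong: if_cong)
  have "t * (z \<bullet> z) = (\<Sum>i\<in>UNIV. t * (z $ i * z $ i))"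
    by (simp add: inner_vec_def sum_distrib_left)
  also have "\<dots> \<le> (\<Sum>i\<in>UNIV. d i * (z $ i * z $ i))"
    by (intro sum_mono mult_right_mono assms) simp
  also have "\<dots> = z \<bullet> (mdiag d *v z)"
    using mdiag_mult by (simp add: inner_vec_def algebra_simps)
  finally show ?thesis .
qed

lemma symmetric_matrix_congruence_mdiag:
  "symmetric_matrix (transpose P ** L ** Q ** mdiag d ** transpose Q ** transpose L ** P)"
  by (simp add: symmetric_matrix_def matrix_transpose_mul matrix_mul_assoc)

lemma congruence_mdiag_quadratic_lower:
  fixes P L Q :: "real^'n^'n"
  assumes P: "orthogonal_matrix P" and Q: "orthogonal_matrix Q"
    and s: "0 \<le> s" "s \<le> sigma_min L" and t: "0 \<le> t" "\<And>j. t \<le> d j"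
  shows "s\<^sup>2 * t * (x \<bullet> x)
    \<le> x \<bullet> ((transpose P ** L ** Q ** mdiag d ** transpose Q ** transpose L ** P) *v x)"
proof -
  define z where "z = transpose Q *v (transpose L *v (P *v x))"
  have "x \<bullet> ((transpose P ** L ** Q ** mdiag d ** transpose Q ** transpose L ** P) *v x)
      = x \<bullet> (transpose P *v (L *v (Q *v (mdiag d *v z))))"
    by (simp add: z_def matrix_vector_mul_assoc matrix_mul_assoc del: transpose_matrix_vector)
  also have "\<dots> = z \<bullet> (mdiag d *v z)"
    by (simp add: z_def inner_matrix_vector_transpose del: transpose_matrix_vector)
  finally have x_z: "x \<bullet> ((transpose P ** L ** Q ** mdiag d ** transpose Q ** transpose L ** P) *v x)
      = z \<bullet> (mdiag d *v z)" .
  have "s * norm x \<le> norm (transpose L *v (P *v x))"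
    using norm_transpose_lower[OF s(1) sigma_min_norm_lower[OF s], of "P *v x"]
    by (simp only: norm_orthogonal_matrix_mult[OF P])
  also have "\<dots> = norm z"
    unfolding z_def by (rule norm_orthogonal_matrix_mult[symmetric]) (simp add: Q)
  finally have "s * norm x \<le> norm z" .
  then have "(s * norm x)\<^sup>2 \<le> z \<bullet> z"
    using s(1) by (simp add: dot_square_norm power_mono)
  then have "s\<^sup>2 * t * (x \<bullet> x) \<le> t * (z \<bullet> z)"
    using t(1) by (simp add: dot_square_norm power_mult_distrib mult_left_mono algebra_simps)
  also have "\<dots> \<le> z \<bullet> (mdiag d *v z)"
    by (rule mdiag_quadratic_lower[OF t(2)])
  finally show ?thesis
    unfolding x_z .
qed

lemma modified_factorization_quadratic_lower:
  fixes P L Q :: "real^'n^'n"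
  assumes P: "perm_matrix P" and Q: "orthogonal_mat Q"
    and s: "0 \<le> s" "s \<le> sigma_min L" and t: "0 \<le> t" "t \<le> \<tau>"
  shows "s\<^sup>2 * t * (x \<bullet> x) \<le> x \<bullet> ((transpose P ** L ** Q ** mdiag (\<lambda>j. max \<tau> \<bar>\<mu> j\<bar>) **
    transpose Q ** transpose L ** P) *v x)"
proof (rule congruence_mdiag_quadratic_lower[OF perm_matrix_orthogonal[OF P] _ s t(1)])
  show "orthogonal_matrix Q"
    using Q by (simp add: orthogonal_mat_def orthogonal_matrix)
  show "t \<le> max \<tau> \<bar>\<mu> j\<bar>" for j
    using t(2) by (simp add: le_max_iff_disj)
qed

lemma norm_matrix_le_onorm:
  fixes A :: "real^'n^'m"
  shows "norm A \<le> real CARD('m) * real CARD('n) * onorm ((*v) A)"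
proof -
  have "norm A \<le> (\<Sum>i\<in>UNIV. norm (A $ i))"
    unfolding norm_vec_def by (rule L2_set_le_sum) simp
  also have "\<dots> \<le> (\<Sum>i\<in>UNIV. \<Sum>j\<in>UNIV. \<bar>A $ i $ j\<bar>)"
    by (intro sum_mono norm_le_l1_cart)
  also have "\<dots> \<le> (\<Sum>i::'m\<in>UNIV. \<Sum>j::'n\<in>UNIV. onorm ((*v) A))"
    by (intro sum_mono matrix_component_le_onorm)
  finally show ?thesis
    by simp
qed

lemma norm_lower_imp_norm_matrix_inv_le:
  fixes H :: "real^'n^'n"
  assumes "0 < m" and "\<And>x. m * norm x \<le> norm (H *v x)"
  shows "norm (matrix_inv H) \<le> real CARD('n) * real CARD('n) * (1 / m)"
proof -
  have "norm (matrix_inv H) \<le> real CARD('n) * real CARD('n) * op_norm (matrix_inv H)"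
    unfolding op_norm_def by (rule norm_matrix_le_onorm)
  also have "\<dots> \<le> real CARD('n) * real CARD('n) * (1 / m)"
    using norm_lower_imp_op_norm_matrix_inv_le[OF assms] by (intro mult_left_mono) simp_all
  finally show ?thesis .
qed

lemma tendsto_scaleR_bounded_zero:
  fixes X :: "'b \<Rightarrow> 'a::real_normed_vector"
  assumes f: "(f \<longlongrightarrow> 0) F" and X: "\<And>x. norm (X x) \<le> K"
  shows "((\<lambda>x. f x *\<^sub>R X x) \<longlongrightarrow> 0) F"
proof (rule Lim_null_comparison)
  show "\<forall>\<^sub>F x in F. norm (f x *\<^sub>R X x) \<le> \<bar>f x\<bar> * K"
    using X by (simp add: mult_left_mono)
  show "((\<lambda>x. \<bar>f x\<bar> * K) \<longlongrightarrow> 0) F"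
    using tendsto_rabs_zero[OF f] by (rule tendsto_mult_left_zero)
qed

lemma nn_integral_powr_le_bound:
  assumes M: "prob_space M" and p: "0 \<le> p"
    and f: "\<And>\<omega>. \<omega> \<in> space M \<Longrightarrow> 0 \<le> f \<omega> \<and> f \<omega> \<le> C"
  shows "(\<integral>\<^sup>+ \<omega>. ennreal (f \<omega> powr p) \<partial>M) \<le> ennreal (C powr p)"
proof (rule subprob_space.nn_integral_le_const[OF prob_space_imp_subprob_space[OF M]])
  show "AE \<omega> in M. ennreal (f \<omega> powr p) \<le> ennreal (C powr p)"
    using f p by (intro AE_I2 ennreal_leI powr_mono2) auto
qed simp

theorem theoremA2:
  fixes M :: "'a measure"
    and Hbar P L B Q :: "nat \<Rightarrow> 'a \<Rightarrow> ((real, 'p::{finite,linorder}) vec, 'p) vec"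
    and lam :: "nat \<Rightarrow> 'a \<Rightarrow> 'p \<Rightarrow> real"
    and tau :: "nat \<Rightarrow> 'a \<Rightarrow> real"
    and tau_low sigma_low :: real
    and c :: "nat \<Rightarrow> real"
    and Hbb :: "nat \<Rightarrow> 'a \<Rightarrow> ((real, 'p) vec, 'p) vec"
  assumes M: "prob_space M"
    and sym: "\<And>k \<omega>. \<omega> \<in> space M \<Longrightarrow> symmetric_matrix (Hbar k \<omega>)"
    and fact: "\<And>k \<omega>. \<omega> \<in> space M \<Longrightarrow>
        Hbar k \<omega> = transpose (P k \<omega>) ** L k \<omega> ** B k \<omega> ** transpose (L k \<omega>) ** P k \<omega>"
    and Pperm: "\<And>k \<omega>. \<omega> \<in> space M \<Longrightarrow> perm_matrix (P k \<omega>)"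
    and Bblk: "\<And>k \<omega>. \<omega> \<in> space M \<Longrightarrow> block_diag_12 (B k \<omega>)"
    and Ltri: "\<And>k \<omega>. \<omega> \<in> space M \<Longrightarrow> unit_lower_triangular (L k \<omega>)"
    and Lbnd: "\<exists>C. \<forall>k. \<forall>\<omega>\<in>space M. \<forall>i j. \<bar>L k \<omega> $ i $ j\<bar> \<le> C"
    and sig_pos: "sigma_low > 0"
    and Lsig: "\<And>k \<omega>. \<omega> \<in> space M \<Longrightarrow> sigma_min (L k \<omega>) \<ge> sigma_low"
    and c_pos: "\<And>k. c k > 0"
    and c_dec: "decseq c"
    and c_lim: "c \<longlonglongrightarrow> 0"
    and tau_pos: "\<And>k \<omega>. \<omega> \<in> space M \<Longrightarrow> tau k \<omega> > 0"
    and tau_low_pos: "tau_low > 0"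
    and tau_low: "\<And>k \<omega>. \<omega> \<in> space M \<Longrightarrow> tau_low \<le> tau k \<omega>"
    and Qorth: "\<And>k \<omega>. \<omega> \<in> space M \<Longrightarrow> orthogonal_mat (Q k \<omega>)"
    and eig: "\<And>k \<omega>. \<omega> \<in> space M \<Longrightarrow>
        B k \<omega> = Q k \<omega> ** mdiag (lam k \<omega>) ** transpose (Q k \<omega>)"
    and Hbb_def: "\<And>k \<omega>. Hbb k \<omega> =
        transpose (P k \<omega>) ** L k \<omega> ** Q k \<omega> **
        mdiag (\<lambda>j. max (tau k \<omega>) \<bar>lam k \<omega> j\<bar>) **
        transpose (Q k \<omega>) ** transpose (L k \<omega>) ** P k \<omega>"
  shows "(\<forall>k. \<forall>\<omega>\<in>space M. lambda_min (Hbb k \<omega>) \<ge> sigma_low\<^sup>2 * tau_low)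
         \<and> sigma_low\<^sup>2 * tau_low > 0
         \<and> (AE \<omega> in M. \<forall>k. invertible (Hbb k \<omega>))
         \<and> (AE \<omega> in M. (\<lambda>k. (c k)\<^sup>2 *\<^sub>R matrix_inv (Hbb k \<omega>)) \<longlonglongrightarrow> 0)
         \<and> (\<exists>\<delta> \<rho>. \<delta> > 0 \<and> \<rho> > 0 \<and>
              (\<forall>k. (\<integral>\<^sup>+ \<omega>. ennreal (op_norm (matrix_inv (Hbb k \<omega>)) powr (2 + \<delta>)) \<partial>M)
                     \<le> ennreal \<rho>))"
proof -
  define m where "m = sigma_low\<^sup>2 * tau_low"
  have m_pos: "0 < m"
    using sig_pos tau_low_pos by (simp add: m_def)
  have Hbb_lower: "m * (x \<bullet> x) \<le> x \<bullet> (Hbb k \<omega> *v x)" if \<omega>: "\<omega> \<in> space M" for k \<omega> x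
    unfolding m_def Hbb_def using sig_pos tau_low_pos Lsig[OF \<omega>] tau_low[OF \<omega>]
    by (intro modified_factorization_quadratic_lower Pperm[OF \<omega>] Qorth[OF \<omega>]) auto
  have Hbb_norm_lower: "m * norm x \<le> norm (Hbb k \<omega> *v x)" if "\<omega> \<in> space M" for k \<omega> x
    using Hbb_lower[OF that] by (rule quadratic_lower_imp_norm_lower)
  have moment: "(\<integral>\<^sup>+ \<omega>. ennreal (op_norm (matrix_inv (Hbb k \<omega>)) powr (2 + 1)) \<partial>M)
      \<le> ennreal ((1 / m) powr (2 + 1))" for k
    using M by (rule nn_integral_powr_le_bound)
      (use norm_lower_imp_op_norm_matrix_inv_le[OF m_pos Hbb_norm_lower] in
        \<open>auto simp: op_norm_def intro: onorm_pos_le\<close>)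
  have "m \<le> lambda_min (Hbb k \<omega>)" if "\<omega> \<in> space M" for k \<omega>
    using Hbb_lower[OF that] by (simp add: Hbb_def le_lambda_min_iff symmetric_matrix_congruence_mdiag)
  moreover have "AE \<omega> in M. \<forall>k. invertible (Hbb k \<omega>)"
    using norm_lower_imp_invertible[OF m_pos Hbb_norm_lower] by (simp add: AE_I2)
  moreover have "AE \<omega> in M. (\<lambda>k. (c k)\<^sup>2 *\<^sub>R matrix_inv (Hbb k \<omega>)) \<longlonglongrightarrow> 0"
    using tendsto_power[OF c_lim, of 2] norm_lower_imp_norm_matrix_inv_le[OF m_pos Hbb_norm_lower]
    by (intro AE_I2 tendsto_scaleR_bounded_zero) auto
  moreover have "\<exists>\<delta> \<rho>. \<delta> > 0 \<and> \<rho> > 0 \<and>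
      (\<forall>k. (\<integral>\<^sup>+ \<omega>. ennreal (op_norm (matrix_inv (Hbb k \<omega>)) powr (2 + \<delta>)) \<partial>M) \<le> ennreal \<rho>)"
    by (rule exI[of _ 1], rule exI[of _ "(1 / m) powr (2 + 1)"]) (use moment m_pos in simp)
  ultimately show ?thesis
    using m_pos unfolding m_def[symmetric] by (intro conjI) blast+
qed

end
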